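(* Let $(X,\mathcal{A})$ be a measurable space, $f\in\mathcal{F}_{[0,1]}^{(X,\mathcal{A})}$, and $m$ a monotone measure on $(X,\mathcal{A})$ with $m(X)=1$. Then for all $0<r\le s<\infty$, \[ \big(\mathbf{Su}(m,f^{s})\big)^{1/s}\ \ge\ \big(\mathbf{Su}(m,f^{r})\big)^{1/r}. \]
   Context: A monotone measure on $(X,\mathcal{A})$ is $m:\mathcal{A}\to[0,\infty]$ with $m(\emptyset)=0$, $m(X)>0$, $m(A)\le m(B)$ for $A\subseteq B$. $\mathcal{F}_{[0,1]}^{(X,\mathcal{A})}$ is the set of $\mathcal{A}$-measurable $f:X\to[0,1]$. The Sugeno integral is $\mathbf{Su}(m,f)=\sup\{\min(t,m(\{f\ge t\})) : t\in(0,\infty]\}$. *)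

theory Defs
  imports "HOL-Analysis.Analysis"
begin

definition monotone_measure :: "'a measure \<Rightarrow> ('a set \<Rightarrow> ennreal) \<Rightarrow> bool" where
  "monotone_measure M m \<longleftrightarrow>
     m {} = 0 \<and> m (space M) > 0 \<and>
     (\<forall>A\<in>sets M. \<forall>B\<in>sets M. A \<subseteq> B \<longrightarrow> m A \<le> m B)"

definition F01 :: "'a measure \<Rightarrow> ('a \<Rightarrow> real) set" where
  "F01 M = {f. f \<in> borel_measurable M \<and> (\<forall>x\<in>space M. 0 \<le> f x \<and> f x \<le> 1)}"

definition sugeno :: "'a measure \<Rightarrow> ('a set \<Rightarrow> ennreal) \<Rightarrow> ('a \<Rightarrow> real) \<Rightarrow> ennreal" where
  "sugeno M m f = (SUP t\<in>{t::ennreal. 0 < t}. min t (m {x\<in>space M. t \<le> ennreal (f x)}))"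

end

theory Submission
  imports Defs
begin

(* If y < Su(m,g) then m{g >= y} > y. For 0 < y <= 1 and p >= 1 the level sets {g^p >= y^p} and
   {g >= y} coincide, so m{g^p >= y^p} > y >= y^p and hence y^p <= Su(m,g^p). Thus
   Su(m,g^p) >= Su(m,g)^p for every nonnegative g once m(X) = 1;
   take g = f^r, p = s/r and s-th roots. *)

lemma sugeno_le_measure_space:
  assumes "g \<in> borel_measurable M" and "monotone_measure M m"
  shows "sugeno M m g \<le> m (space M)"
  unfolding sugeno_def
proof (rule SUP_least)
  fix t :: ennreal
  have "{x\<in>space M. t \<le> ennreal (g x)} \<in> sets M"
    using assms(1) by measurable
  then have "m {x\<in>space M. t \<le> ennreal (g x)} \<le> m (space M)"
    using assms(2) unfolding monotone_measure_def by auto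
  then show "min t (m {x\<in>space M. t \<le> ennreal (g x)}) \<le> m (space M)"
    by (simp add: min.coboundedI2)
qed

lemma less_sugeno_imp_less_level_measure:
  assumes "g \<in> borel_measurable M" and "monotone_measure M m"
    and "c < sugeno M m g"
  shows "c < m {x\<in>space M. c \<le> ennreal (g x)}"
proof -
  obtain t :: ennreal where "0 < t" and c_less: "c < min t (m {x\<in>space M. t \<le> ennreal (g x)})"
    using assms(3) unfolding sugeno_def less_SUP_iff by blast
  then have "c < t" and c_less_level: "c < m {x\<in>space M. t \<le> ennreal (g x)}"
    by simp_all
  have "{x\<in>space M. t \<le> ennreal (g x)} \<subseteq> {x\<in>space M. c \<le> ennreal (g x)}"
    using \<open>c < t\<close> by (auto intro: order.trans less_imp_le)
  moreover have "{x\<in>space M. t \<le> ennreal (g x)} \<in> sets M"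
    using assms(1) by measurable
  moreover have "{x\<in>space M. c \<le> ennreal (g x)} \<in> sets M"
    using assms(1) by measurable
  ultimately have "m {x\<in>space M. t \<le> ennreal (g x)} \<le> m {x\<in>space M. c \<le> ennreal (g x)}"
    using assms(2) unfolding monotone_measure_def by blast
  with c_less_level show ?thesis
    by (rule order.strict_trans2)
qed

lemma le_sugeno_if_le_level_measure:
  assumes "c \<le> m {x\<in>space M. c \<le> ennreal (g x)}"
  shows "c \<le> sugeno M m g"
proof (cases "c = 0")
  case False
  then show ?thesis
    unfolding sugeno_def using assms by (intro SUP_upper2[of c]) (auto simp: zero_less_iff_neq_zero)
qed simp

lemma powr_le_powr_iff:
  fixes a x y :: real
  assumes "0 < a" and "0 \<le> x" and "0 \<le> y"
  shows "x powr a \<le> y powr a \<longleftrightarrow> x \<le> y"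
  using powr_mono2[of a x y] powr_less_mono2[of a y x] assms by force

lemma powr_le_if_powr_le_below:
  fixes a b p :: real
  assumes "0 \<le> a" and "0 \<le> b" and "0 < p"
    and below: "\<And>y. 0 < y \<Longrightarrow> y < a \<Longrightarrow> y powr p \<le> b"
  shows "a powr p \<le> b"
proof (rule ccontr)
  assume "\<not> a powr p \<le> b"
  then obtain z where "b < z" and "z < a powr p"
    using dense by (meson not_le)
  then have "0 < z"
    using assms(2) by linarith
  have "z powr (1/p) < (a powr p) powr (1/p)"
    using \<open>0 < z\<close> \<open>z < a powr p\<close> assms(3) by (intro powr_less_mono2) auto
  then have "z powr (1/p) < a"
    using assms(1,3) by (simp add: powr_powr)
  then have "(z powr (1/p)) powr p \<le> b"
    using \<open>0 < z\<close> by (intro below) auto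
  then show False
    using \<open>0 < z\<close> \<open>b < z\<close> assms(3) by (simp add: powr_powr)
qed

lemma sugeno_powr_ge_powr_sugeno:
  fixes g :: "'a \<Rightarrow> real" and p :: real
  assumes g_meas: "g \<in> borel_measurable M" and g_nonneg: "\<And>x. x \<in> space M \<Longrightarrow> 0 \<le> g x"
    and mono: "monotone_measure M m" and normed: "m (space M) = 1"
    and "1 \<le> p"
  shows "enn2real (sugeno M m g) powr p \<le> enn2real (sugeno M m (\<lambda>x. g x powr p))"
proof (rule powr_le_if_powr_le_below)
  have sugeno_bounds: "sugeno M m h < top" "enn2real (sugeno M m h) \<le> 1"
    if "h \<in> borel_measurable M" for h
  proof -
    have "sugeno M m h \<le> 1"
      using sugeno_le_measure_space[OF that mono] normed by simp
    then show "sugeno M m h < top" and "enn2real (sugeno M m h) \<le> 1"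
      using enn2real_mono[of "sugeno M m h" 1] by (simp_all add: order.strict_trans1)
  qed
  have g_p_meas: "(\<lambda>x. g x powr p) \<in> borel_measurable M"
    using g_meas by measurable
  fix y :: real
  assume "0 < y" and y_less: "y < enn2real (sugeno M m g)"
  have "ennreal y < ennreal (enn2real (sugeno M m g))"
    using y_less \<open>0 < y\<close> by (intro ennreal_lessI) simp_all
  then have "ennreal y < sugeno M m g"
    using sugeno_bounds(1)[OF g_meas] by simp
  have "y \<le> 1"
    using y_less sugeno_bounds(2)[OF g_meas] by simp
  have "y powr p \<le> y"
    using powr_mono'[OF \<open>1 \<le> p\<close> _ \<open>y \<le> 1\<close>] \<open>0 < y\<close> by simp
  have "ennreal (y powr p) \<le> ennreal (g x powr p) \<longleftrightarrow> ennreal y \<le> ennreal (g x)"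
    if "x \<in> space M" for x
    using g_nonneg[OF that] \<open>0 < y\<close> \<open>1 \<le> p\<close> by (simp add: powr_le_powr_iff)
  then have same_level_set: "{x\<in>space M. ennreal (y powr p) \<le> ennreal (g x powr p)}
      = {x\<in>space M. ennreal y \<le> ennreal (g x)}"
    by blast
  have "ennreal (y powr p) \<le> ennreal y"
    using \<open>y powr p \<le> y\<close> by (rule ennreal_leI)
  also have "\<dots> < m {x\<in>space M. ennreal y \<le> ennreal (g x)}"
    using less_sugeno_imp_less_level_measure[OF g_meas mono \<open>ennreal y < sugeno M m g\<close>] .
  finally have "ennreal (y powr p) \<le> sugeno M m (\<lambda>x. g x powr p)"
    using same_level_set by (intro le_sugeno_if_le_level_measure) simp
  then have "enn2real (ennreal (y powr p)) \<le> enn2real (sugeno M m (\<lambda>x. g x powr p))"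
    using sugeno_bounds(1)[OF g_p_meas] by (rule enn2real_mono)
  then show "y powr p \<le> enn2real (sugeno M m (\<lambda>x. g x powr p))"
    by simp
qed (use \<open>1 \<le> p\<close> in auto)

theorem corollary3p30:
  fixes M :: "'a measure" and m :: "'a set \<Rightarrow> ennreal" and f :: "'a \<Rightarrow> real"
    and r s :: real
  assumes "f \<in> F01 M"
    and "monotone_measure M m"
    and "m (space M) = 1"
    and "0 < r" and "r \<le> s"
  shows "enn2real (sugeno M m (\<lambda>x. f x powr s)) powr (1 / s)
           \<ge> enn2real (sugeno M m (\<lambda>x. f x powr r)) powr (1 / r)"
proof -
  have f_meas: "f \<in> borel_measurable M" and f_nonneg: "\<And>x. x \<in> space M \<Longrightarrow> 0 \<le> f x"
    using assms(1) unfolding F01_def by auto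
  have "0 < s" and "1 \<le> s / r"
    using assms(4,5) by simp_all
  define a where "a = enn2real (sugeno M m (\<lambda>x. f x powr r))"
  define b where "b = enn2real (sugeno M m (\<lambda>x. f x powr s))"
  have f_powr_s: "(\<lambda>x. f x powr s) = (\<lambda>x. (f x powr r) powr (s / r))"
    using assms(4) by (simp add: powr_powr)
  have "(\<lambda>x. f x powr r) \<in> borel_measurable M"
    using f_meas by measurable
  then have "a powr (s / r) \<le> b"
    unfolding a_def b_def f_powr_s
    using f_nonneg assms(2,3) \<open>1 \<le> s / r\<close> by (intro sugeno_powr_ge_powr_sugeno) auto
  then have "(a powr (s / r)) powr (1 / s) \<le> b powr (1 / s)"
    using \<open>0 < s\<close> by (intro powr_mono2) auto
  then show ?thesis
    using \<open>0 < s\<close> assms(4) unfolding a_def b_def by (simp add: powr_powr)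
qed

end
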